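(* Let $\mathcal C$ be a convex curve whose radius of curvature satisfies $\rho\ge R_1$ at every point, for some constant $R_1>0$, and whose total curvature satisfies $\int_{\mathcal C}\kappa\,ds\le \pi$. Let $\mathcal L$ be a lattice in $\mathbb R^2$. If $$\frac{\mathrm{Length}(\mathcal C)}{(A_{\mathcal L} R_1)^{1/3}}\le 2,$$ then $\mathcal C$ contains at most two points of $\mathcal L$.
   Context: A lattice is a set $\mathcal L=\mathcal L(v_0,v_1,v_2)=\{v_0+mv_1+nv_2: m,n\in\mathbb Z\}$ where $v_0,v_1,v_2\in\mathbb R^2$ and $v_1,v_2$ are linearly independent (points need not have integer coordinates). Its invariant is $A_{\mathcal L}=|\det(v_1,v_2)|$, the absolute value of the determinant of the $2\times2$ matrix with columns $v_1,v_2$. All curves are of class $C^2$ with nonvanishing first and second derivative vectors, oriented so that the curvature $\kappa$ is positive; a convex curve is such a curve (lying on the boundary of a convex planar region). The radius of curvature is $\rho=1/\kappa$, $s$ is arclength, and the total curvature of $\mathcal C$ is $\int_{\mathcal C}\kappa\,ds$, the total change of the tangent angle along $\mathcal C$. *)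

theory Defs
  imports "HOL-Analysis.Analysis"
begin

definition det2 :: "real^2 \<Rightarrow> real^2 \<Rightarrow> real" where
  "det2 u v = u$1 * v$2 - u$2 * v$1"

definition lattice :: "real^2 \<Rightarrow> real^2 \<Rightarrow> real^2 \<Rightarrow> (real^2) set" where
  "lattice v0 v1 v2 = {v0 + of_int m *\<^sub>R v1 + of_int n *\<^sub>R v2 | m n. True}"

definition lattice_invariant :: "real^2 \<Rightarrow> real^2 \<Rightarrow> real" where
  "lattice_invariant v1 v2 = \<bar>det2 v1 v2\<bar>"

definition vd1 :: "(real \<Rightarrow> real^2) \<Rightarrow> real \<Rightarrow> real \<Rightarrow> real \<Rightarrow> real^2" where
  "vd1 \<gamma> a b t = vector_derivative \<gamma> (at t within {a..b})"

definition vd2 :: "(real \<Rightarrow> real^2) \<Rightarrow> real \<Rightarrow> real \<Rightarrow> real \<Rightarrow> real^2" where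
  "vd2 \<gamma> a b t = vector_derivative (vd1 \<gamma> a b) (at t within {a..b})"

definition C2_regular_curve :: "(real \<Rightarrow> real^2) \<Rightarrow> real \<Rightarrow> real \<Rightarrow> bool" where
  "C2_regular_curve \<gamma> a b \<longleftrightarrow> a < b \<and>
     (\<forall>t\<in>{a..b}. \<gamma> differentiable (at t within {a..b}) \<and>
                  vd1 \<gamma> a b differentiable (at t within {a..b})) \<and>
     continuous_on {a..b} (vd2 \<gamma> a b) \<and>
     (\<forall>t\<in>{a..b}. vd1 \<gamma> a b t \<noteq> 0 \<and> vd2 \<gamma> a b t \<noteq> 0)"

definition curvature :: "(real \<Rightarrow> real^2) \<Rightarrow> real \<Rightarrow> real \<Rightarrow> real \<Rightarrow> real" where
  "curvature \<gamma> a b t = det2 (vd1 \<gamma> a b t) (vd2 \<gamma> a b t) / norm (vd1 \<gamma> a b t) ^ 3"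

definition convex_curve :: "(real \<Rightarrow> real^2) \<Rightarrow> real \<Rightarrow> real \<Rightarrow> bool" where
  "convex_curve \<gamma> a b \<longleftrightarrow> C2_regular_curve \<gamma> a b \<and>
     (\<forall>t\<in>{a..b}. curvature \<gamma> a b t > 0) \<and>
     (\<exists>K::(real^2) set. convex K \<and> \<gamma> ` {a..b} \<subseteq> frontier K)"

definition curve_length :: "(real \<Rightarrow> real^2) \<Rightarrow> real \<Rightarrow> real \<Rightarrow> real" where
  "curve_length \<gamma> a b = integral {a..b} (\<lambda>t. norm (vd1 \<gamma> a b t))"

definition total_curvature :: "(real \<Rightarrow> real^2) \<Rightarrow> real \<Rightarrow> real \<Rightarrow> real" where
  "total_curvature \<gamma> a b = integral {a..b} (\<lambda>t. curvature \<gamma> a b t * norm (vd1 \<gamma> a b t))"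

end

(* Three lattice points met in this order along the curve give two chords whose determinant
   det2 (P2 - P1) (P3 - P2) is a nonzero integer multiple of det2 v1 v2, so its absolute value
   is at least A_L.  On the other hand this determinant is the double integral of
   sin (theta u - theta s) over arclength parameters s < u on the two arcs, theta being the
   tangent angle.  Total curvature at most pi keeps 0 < theta u - theta s < pi, and rho >= R1
   gives theta u - theta s <= (u - s) / R1.  Hence, with sin x < x, the determinant lies
   strictly between 0 and l1 l2 (l1 + l2) / (2 R1) <= L^3 / (8 R1) <= A_L, where l1, l2 are the
   arc lengths: a contradiction. *)

theory Submission
  imports Defs
begin

lemma sin_less_self:
  fixes x :: real
  assumes "0 < x"
  shows "sin x < x"
proof (cases "x \<le> pi")
  case True
  have "(\<lambda>y. y - sin y) 0 < (\<lambda>y. y - sin y) x"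
  proof (rule DERIV_pos_imp_increasing_open[OF assms])
    fix y :: real assume "0 < y" "y < x"
    then have "cos y < 1" using cos_monotone_0_pi[of 0 y] True by simp
    then show "\<exists>d. ((\<lambda>y. y - sin y) has_real_derivative d) (at y) \<and> d > 0"
      by (intro exI[of _ "1 - cos y"]) (auto intro!: derivative_eq_intros)
  qed (intro continuous_intros)
  then show ?thesis by simp
next
  case False
  then show ?thesis using sin_le_one[of x] pi_gt3 by linarith
qed

lemma mult_mult_add_le_cube_div_4:
  fixes x y L :: real
  assumes "0 \<le> x" "0 \<le> y" "x + y \<le> L"
  shows "x * y * (x + y) \<le> L ^ 3 / 4"
proof -
  have "4 * (x * y) \<le> (x + y)\<^sup>2"
    using sum_squares_ge_zero[of "x - y" 0] by (simp add: power2_eq_square algebra_simps)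
  then have "4 * (x * y) * (x + y) \<le> (x + y)\<^sup>2 * (x + y)"
    using assms by (intro mult_right_mono) auto
  then have "x * y * (x + y) \<le> (x + y) ^ 3 / 4"
    by (simp add: power3_eq_cube power2_eq_square)
  also have "\<dots> \<le> L ^ 3 / 4"
    using assms by (simp add: power_mono)
  finally show ?thesis .
qed

lemma cube_le_if_le_twice_cube_root:
  fixes L A R :: real
  assumes "0 < A" "0 < R" "L / (A * R) powr (1/3) \<le> 2"
  shows "L ^ 3 / (8 * R) \<le> A"
proof (cases "L \<le> 0")
  case True
  then have "L ^ 3 \<le> 0" by (simp add: power_le_zero_eq)
  then show ?thesis using assms divide_nonpos_pos[of "L ^ 3" "8 * R"] by linarith
next
  case False
  have "L \<le> 2 * (A * R) powr (1/3)"
    using assms by (simp add: divide_le_eq)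
  then have "L ^ 3 \<le> (2 * (A * R) powr (1/3)) ^ 3"
    using False by (intro power_mono) auto
  also have "\<dots> = 8 * (A * R)"
    using assms by (simp add: power_mult_distrib powr_realpow[symmetric] powr_powr)
  finally show ?thesis using assms by (simp add: field_simps)
qed

lemma three_elements_if_not_card_le_2:
  fixes A :: "'a::linorder set"
  assumes "\<not> (finite A \<and> card A \<le> 2)"
  obtains x y z where "x \<in> A" "y \<in> A" "z \<in> A" "x < y" "y < z"
proof -
  obtain T where "T \<subseteq> A" "card T = 3"
    using assms infinite_arbitrarily_large obtain_subset_with_card_n
    by (metis not_less_eq_eq numeral_2_eq_2 numeral_3_eq_3)
  then obtain x y z where "T = {x, y, z}" "x \<noteq> y" "y \<noteq> z" "x \<noteq> z"
    by (auto simp: card_3_iff)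
  with \<open>T \<subseteq> A\<close> that show ?thesis
    by (cases x y rule: linorder_cases; cases y z rule: linorder_cases; cases x z rule: linorder_cases)
      auto
qed

lemma det2_lattice_combinations:
  "det2 (of_int m *\<^sub>R v1 + of_int n *\<^sub>R v2) (of_int m' *\<^sub>R v1 + of_int n' *\<^sub>R v2)
     = of_int (m * n' - n * m') * det2 v1 v2"
  by (simp add: det2_def algebra_simps)

lemma lattice_diff:
  assumes "p \<in> lattice v0 v1 v2" "q \<in> lattice v0 v1 v2"
  obtains m n :: int where "q - p = of_int m *\<^sub>R v1 + of_int n *\<^sub>R v2"
proof -
  obtain m n m' n' :: int where "p = v0 + of_int m *\<^sub>R v1 + of_int n *\<^sub>R v2"
    "q = v0 + of_int m' *\<^sub>R v1 + of_int n' *\<^sub>R v2"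
    using assms unfolding lattice_def by blast
  then have "q - p = of_int (m' - m) *\<^sub>R v1 + of_int (n' - n) *\<^sub>R v2"
    by (simp add: algebra_simps)
  then show ?thesis by (rule that)
qed

lemma lattice_invariant_le_det2:
  assumes "p \<in> lattice v0 v1 v2" "q \<in> lattice v0 v1 v2" "r \<in> lattice v0 v1 v2"
    and "det2 (q - p) (r - q) \<noteq> 0"
  shows "lattice_invariant v1 v2 \<le> \<bar>det2 (q - p) (r - q)\<bar>"
proof -
  obtain m n m' n' :: int where "q - p = of_int m *\<^sub>R v1 + of_int n *\<^sub>R v2"
    "r - q = of_int m' *\<^sub>R v1 + of_int n' *\<^sub>R v2"
    using lattice_diff assms(1-3) by metis
  then have det: "det2 (q - p) (r - q) = of_int (m * n' - n * m') * det2 v1 v2"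
    by (simp add: det2_lattice_combinations)
  then have "m * n' - n * m' \<noteq> 0" using assms(4) by (metis mult_zero_left of_int_0)
  then have "1 \<le> \<bar>real_of_int (m * n' - n * m')\<bar>" by linarith
  then show ?thesis
    unfolding det lattice_invariant_def abs_mult by (simp add: mult_le_cancel_right1)
qed

lemma det2_polar:
  assumes "u $ 1 = norm u * cos \<alpha>" "u $ 2 = norm u * sin \<alpha>"
    and "w $ 1 = norm w * cos \<beta>" "w $ 2 = norm w * sin \<beta>"
  shows "det2 u w = norm u * norm w * sin (\<beta> - \<alpha>)"
  using assms by (simp add: det2_def sin_diff algebra_simps)

lemma has_real_derivative_vec_nth [derivative_intros]:
  fixes f :: "real \<Rightarrow> real^'n"
  assumes "(f has_vector_derivative f') F"
  shows "((\<lambda>t. f t $ i) has_real_derivative f' $ i) F"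
  using bounded_linear.has_vector_derivative[OF bounded_linear_vec_nth assms]
  by (simp add: has_real_derivative_iff_has_vector_derivative)

lemma continuous_on_if_has_vector_derivative_within:
  assumes "\<And>t. t \<in> S \<Longrightarrow> (f has_vector_derivative f' t) (at t within S)"
  shows "continuous_on S f"
  using assms continuous_on_eq_continuous_within has_vector_derivative_continuous by blast

lemma increment_strict_bounds:
  fixes g h g' h' :: "real \<Rightarrow> real"
  assumes "s < u" "continuous_on {s..u} g" "continuous_on {s..u} h"
    and "\<And>t. s < t \<Longrightarrow> t < u \<Longrightarrow> (g has_real_derivative g' t) (at t)"
    and "\<And>t. s < t \<Longrightarrow> t < u \<Longrightarrow> (h has_real_derivative h' t) (at t)"
    and "\<And>t. s < t \<Longrightarrow> t < u \<Longrightarrow> 0 < g' t \<and> g' t < h' t"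
  shows "0 < g u - g s \<and> g u - g s < h u - h s"
proof
  show "0 < g u - g s"
    using DERIV_pos_imp_increasing_open[OF assms(1) _ assms(2)] assms(4,6) by force
  have "(\<lambda>t. h t - g t) s < (\<lambda>t. h t - g t) u"
  proof (rule DERIV_pos_imp_increasing_open[OF assms(1)])
    fix t assume "s < t" "t < u"
    then show "\<exists>d. ((\<lambda>t. h t - g t) has_real_derivative d) (at t) \<and> 0 < d"
      using assms(4-6) by (intro exI[of _ "h' t - g' t"]) (auto intro!: derivative_eq_intros)
  qed (intro continuous_intros assms(2,3))
  then show "g u - g s < h u - h s" by simp
qed

lemma increment_le_if_derivative_le:
  fixes g h g' h' :: "real \<Rightarrow> real"
  assumes "s \<le> u" "continuous_on {s..u} g" "continuous_on {s..u} h"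
    and "\<And>t. s < t \<Longrightarrow> t < u \<Longrightarrow> (g has_real_derivative g' t) (at t)"
    and "\<And>t. s < t \<Longrightarrow> t < u \<Longrightarrow> (h has_real_derivative h' t) (at t)"
    and "\<And>t. s < t \<Longrightarrow> t < u \<Longrightarrow> g' t \<le> h' t"
  shows "g u - g s \<le> h u - h s"
proof -
  have "(\<lambda>t. h t - g t) s \<le> (\<lambda>t. h t - g t) u"
  proof (rule DERIV_nonneg_imp_increasing_open[of s u "\<lambda>t. h t - g t", OF assms(1)])
    fix t assume "s < t" "t < u"
    then show "\<exists>d. ((\<lambda>t. h t - g t) has_real_derivative d) (at t) \<and> 0 \<le> d"
      using assms(4-6) by (intro exI[of _ "h' t - g' t"]) (auto intro!: derivative_eq_intros)
  qed (intro continuous_intros assms(2,3))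
  then show ?thesis by simp
qed

lemma det2_chord_bound_from_tangents:
  fixes f f' :: "real \<Rightarrow> real^2" and \<sigma> r :: "real \<Rightarrow> real"
  assumes "t\<^sub>1 < t\<^sub>2" "0 < R"
    and cont_f: "continuous_on {t\<^sub>1..t\<^sub>2} f" and cont_\<sigma>: "continuous_on {t\<^sub>1..t\<^sub>2} \<sigma>"
    and deriv_f: "\<And>t. t\<^sub>1 < t \<Longrightarrow> t < t\<^sub>2 \<Longrightarrow> (f has_vector_derivative f' t) (at t)"
    and deriv_\<sigma>: "\<And>t. t\<^sub>1 < t \<Longrightarrow> t < t\<^sub>2 \<Longrightarrow> (\<sigma> has_real_derivative r t) (at t)"
    and tangents: "\<And>s. t\<^sub>1 < s \<Longrightarrow> s < t\<^sub>2 \<Longrightarrow>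
      0 < det2 (f' s) w \<and> det2 (f' s) w < r s * c * (\<sigma>\<^sub>0 - \<sigma> s) / R"
  shows "0 < det2 (f t\<^sub>2 - f t\<^sub>1) w \<and>
    det2 (f t\<^sub>2 - f t\<^sub>1) w < c * ((\<sigma>\<^sub>0 - \<sigma> t\<^sub>1)\<^sup>2 - (\<sigma>\<^sub>0 - \<sigma> t\<^sub>2)\<^sup>2) / (2 * R)"
proof -
  let ?g = "\<lambda>s. det2 (f s - f t\<^sub>1) w"
  let ?h = "\<lambda>s. c * ((\<sigma>\<^sub>0 - \<sigma> t\<^sub>1)\<^sup>2 - (\<sigma>\<^sub>0 - \<sigma> s)\<^sup>2) / (2 * R)"
  have "0 < ?g t\<^sub>2 - ?g t\<^sub>1 \<and> ?g t\<^sub>2 - ?g t\<^sub>1 < ?h t\<^sub>2 - ?h t\<^sub>1"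
  proof (rule increment_strict_bounds[OF assms(1) _ _ _ _ tangents])
    show "continuous_on {t\<^sub>1..t\<^sub>2} ?g" "continuous_on {t\<^sub>1..t\<^sub>2} ?h"
      unfolding det2_def using assms(2) by (auto intro!: continuous_intros cont_f cont_\<sigma>)
    fix s assume "t\<^sub>1 < s" "s < t\<^sub>2"
    then show "(?g has_real_derivative det2 (f' s) w) (at s)"
      "(?h has_real_derivative r s * c * (\<sigma>\<^sub>0 - \<sigma> s) / R) (at s)"
      using assms(2)
      by (auto intro!: derivative_eq_intros deriv_f deriv_\<sigma> simp: det2_def field_simps power2_eq_square)
  qed
  then show ?thesis by (simp add: det2_def)
qed

text \<open>The determinant of two consecutive chords is the double integral of
  \<open>det2 (f' s) (f' u)\<close> over \<open>t\<^sub>1 < s < t\<^sub>2 < u < t\<^sub>3\<close>; it is bounded without integrating,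
  by comparing derivatives first in \<open>s\<close> and then in \<open>u\<close>.\<close>

lemma det2_chords_bound_from_tangents:
  fixes f f' :: "real \<Rightarrow> real^2" and \<sigma> r :: "real \<Rightarrow> real"
  assumes "t\<^sub>1 < t\<^sub>2" "t\<^sub>2 < t\<^sub>3" "0 < R"
    and cont_f: "continuous_on {t\<^sub>1..t\<^sub>3} f" and cont_\<sigma>: "continuous_on {t\<^sub>1..t\<^sub>3} \<sigma>"
    and deriv_f: "\<And>t. t\<^sub>1 < t \<Longrightarrow> t < t\<^sub>3 \<Longrightarrow> (f has_vector_derivative f' t) (at t)"
    and deriv_\<sigma>: "\<And>t. t\<^sub>1 < t \<Longrightarrow> t < t\<^sub>3 \<Longrightarrow> (\<sigma> has_real_derivative r t) (at t)"
    and tangents: "\<And>s u. t\<^sub>1 < s \<Longrightarrow> s < u \<Longrightarrow> u < t\<^sub>3 \<Longrightarrow>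
      0 < det2 (f' s) (f' u) \<and> det2 (f' s) (f' u) < r s * r u * (\<sigma> u - \<sigma> s) / R"
  shows "0 < det2 (f t\<^sub>2 - f t\<^sub>1) (f t\<^sub>3 - f t\<^sub>2) \<and>
    det2 (f t\<^sub>2 - f t\<^sub>1) (f t\<^sub>3 - f t\<^sub>2)
      < (\<sigma> t\<^sub>2 - \<sigma> t\<^sub>1) * (\<sigma> t\<^sub>3 - \<sigma> t\<^sub>2) * (\<sigma> t\<^sub>3 - \<sigma> t\<^sub>1) / (2 * R)"
proof -
  have sub1: "{t\<^sub>1..t\<^sub>2} \<subseteq> {t\<^sub>1..t\<^sub>3}" and sub2: "{t\<^sub>2..t\<^sub>3} \<subseteq> {t\<^sub>1..t\<^sub>3}"
    using assms(1,2) by auto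
  let ?g = "\<lambda>u. det2 (f t\<^sub>2 - f t\<^sub>1) (f u - f t\<^sub>2)"
  let ?h = "\<lambda>u. ((\<sigma> u - \<sigma> t\<^sub>1) ^ 3 - (\<sigma> u - \<sigma> t\<^sub>2) ^ 3 - (\<sigma> t\<^sub>2 - \<sigma> t\<^sub>1) ^ 3) / (6 * R)"
  have "0 < ?g t\<^sub>3 - ?g t\<^sub>2 \<and> ?g t\<^sub>3 - ?g t\<^sub>2 < ?h t\<^sub>3 - ?h t\<^sub>2"
  proof (rule increment_strict_bounds[OF assms(2)])
    show "continuous_on {t\<^sub>2..t\<^sub>3} ?g" "continuous_on {t\<^sub>2..t\<^sub>3} ?h"
      unfolding det2_def using assms(3)
      by (auto intro!: continuous_intros continuous_on_subset[OF cont_f sub2]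
          continuous_on_subset[OF cont_\<sigma> sub2])
    fix u assume u: "t\<^sub>2 < u" "u < t\<^sub>3"
    then show "(?g has_real_derivative det2 (f t\<^sub>2 - f t\<^sub>1) (f' u)) (at u)"
      "(?h has_real_derivative r u * ((\<sigma> u - \<sigma> t\<^sub>1)\<^sup>2 - (\<sigma> u - \<sigma> t\<^sub>2)\<^sup>2) / (2 * R)) (at u)"
      using assms(1,3)
      by (auto intro!: derivative_eq_intros deriv_f deriv_\<sigma>
          simp: det2_def field_simps power2_eq_square power3_eq_cube)
    show "0 < det2 (f t\<^sub>2 - f t\<^sub>1) (f' u) \<and>
        det2 (f t\<^sub>2 - f t\<^sub>1) (f' u) < r u * ((\<sigma> u - \<sigma> t\<^sub>1)\<^sup>2 - (\<sigma> u - \<sigma> t\<^sub>2)\<^sup>2) / (2 * R)"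
      using assms(1,3) u
      by (intro det2_chord_bound_from_tangents[where f' = f' and r = r]
          continuous_on_subset[OF cont_f sub1] continuous_on_subset[OF cont_\<sigma> sub1]
          deriv_f deriv_\<sigma> tangents) auto
  qed
  moreover have "(\<sigma> t\<^sub>3 - \<sigma> t\<^sub>1) ^ 3 - (\<sigma> t\<^sub>3 - \<sigma> t\<^sub>2) ^ 3 - (\<sigma> t\<^sub>2 - \<sigma> t\<^sub>1) ^ 3
      = 3 * ((\<sigma> t\<^sub>2 - \<sigma> t\<^sub>1) * (\<sigma> t\<^sub>3 - \<sigma> t\<^sub>2) * (\<sigma> t\<^sub>3 - \<sigma> t\<^sub>1))"
    by (simp add: power3_eq_cube algebra_simps)
  ultimately show ?thesis by (simp add: det2_def mult_ac)
qed

lemma norm_real2_squared: "(norm (v :: real^2))\<^sup>2 = (v $ 1)\<^sup>2 + (v $ 2)\<^sup>2"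
  by (simp add: norm_vec_def L2_set_def UNIV_2)

lemma has_real_derivative_norm:
  fixes v :: "real \<Rightarrow> 'a::real_inner"
  assumes "(v has_vector_derivative v') (at t)" "v t \<noteq> 0"
  shows "((\<lambda>s. norm (v s)) has_real_derivative inner (v t) v' / norm (v t)) (at t)"
  unfolding has_field_derivative_def
  by (rule has_derivative_eq_rhs[OF has_derivative_compose[OF
        assms(1)[unfolded has_vector_derivative_def] has_derivative_norm[OF assms(2)]]])
    (simp add: fun_eq_iff sgn_div_norm inner_commute field_simps)

lemma unit_vector_derivative_identities:
  fixes x y x' y' N :: real
  assumes "0 < N" "N\<^sup>2 = x\<^sup>2 + y\<^sup>2"
  shows "(x' * N - x * ((x * x' + y * y') / N)) / (N * N) = - ((x * y' - y * x') / N\<^sup>2) * (y / N)"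
    and "(y' * N - y * ((x * x' + y * y') / N)) / (N * N) = (x * y' - y * x') / N\<^sup>2 * (x / N)"
proof -
  have quotient: "(z' * N - z * ((x * x' + y * y') / N)) / (N * N)
      = (z' * N\<^sup>2 - z * (x * x' + y * y')) / N ^ 3"
    for z z' :: real
    using assms(1) by (simp add: field_simps power2_eq_square power3_eq_cube)
  have "x' * N\<^sup>2 - x * (x * x' + y * y') = - (x * y' - y * x') * y"
    "y' * N\<^sup>2 - y * (x * x' + y * y') = (x * y' - y * x') * x"
    unfolding assms(2) by algebra+
  then show "(x' * N - x * ((x * x' + y * y') / N)) / (N * N) = - ((x * y' - y * x') / N\<^sup>2) * (y / N)"
    and "(y' * N - y * ((x * x' + y * y') / N)) / (N * N) = (x * y' - y * x') / N\<^sup>2 * (x / N)"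
    unfolding quotient by (simp_all add: power2_eq_square power3_eq_cube minus_divide_left)
qed

lemma unit_vector_components_derivative:
  fixes v :: "real \<Rightarrow> real^2"
  assumes "(v has_vector_derivative v') (at t)" "v t \<noteq> 0"
  defines "k \<equiv> det2 (v t) v' / (norm (v t))\<^sup>2"
  shows "((\<lambda>s. v s $ 1 / norm (v s)) has_real_derivative - k * (v t $ 2 / norm (v t))) (at t)"
    and "((\<lambda>s. v s $ 2 / norm (v s)) has_real_derivative k * (v t $ 1 / norm (v t))) (at t)"
proof -
  have "inner (v t) v' = v t $ 1 * v' $ 1 + v t $ 2 * v' $ 2"
    by (simp add: inner_vec_def UNIV_2)
  then have norm_deriv: "((\<lambda>s. norm (v s)) has_real_derivative
      (v t $ 1 * v' $ 1 + v t $ 2 * v' $ 2) / norm (v t)) (at t)"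
    using has_real_derivative_norm[OF assms(1,2)] by simp
  have "0 < norm (v t)" "(norm (v t))\<^sup>2 = (v t $ 1)\<^sup>2 + (v t $ 2)\<^sup>2"
    using assms(2) norm_real2_squared by auto
  note identities = unit_vector_derivative_identities[OF this, where x'="v' $ 1" and y'="v' $ 2"]
  show "((\<lambda>s. v s $ 1 / norm (v s)) has_real_derivative - k * (v t $ 2 / norm (v t))) (at t)"
    using DERIV_divide[OF has_real_derivative_vec_nth[OF assms(1), where i=1] norm_deriv] assms(2)
    unfolding identities k_def det2_def by simp
  show "((\<lambda>s. v s $ 2 / norm (v s)) has_real_derivative k * (v t $ 1 / norm (v t))) (at t)"
    using DERIV_divide[OF has_real_derivative_vec_nth[OF assms(1), where i=2] norm_deriv] assms(2)
    unfolding identities k_def det2_def by simp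
qed

lemma rotation_ode_eq_cos_sin:
  fixes X Y \<theta> k :: "real \<Rightarrow> real"
  assumes "continuous_on {a..b} X" "continuous_on {a..b} Y" "continuous_on {a..b} \<theta>"
    and "\<And>t. a < t \<Longrightarrow> t < b \<Longrightarrow> (X has_real_derivative - k t * Y t) (at t)"
    and "\<And>t. a < t \<Longrightarrow> t < b \<Longrightarrow> (Y has_real_derivative k t * X t) (at t)"
    and "\<And>t. a < t \<Longrightarrow> t < b \<Longrightarrow> (\<theta> has_real_derivative k t) (at t)"
    and "X a = cos (\<theta> a)" "Y a = sin (\<theta> a)" "t \<in> {a..b}"
  shows "X t = cos (\<theta> t) \<and> Y t = sin (\<theta> t)"
proof -
  \<comment> \<open>\<open>\<Phi>\<close> is constant since both \<open>(X, Y)\<close> and \<open>(cos \<theta>, sin \<theta>)\<close> rotate with angular speed \<open>k\<close>.\<close>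
  define \<Phi> where "\<Phi> s = (X s - cos (\<theta> s))\<^sup>2 + (Y s - sin (\<theta> s))\<^sup>2" for s
  have "\<Phi> t = \<Phi> a"
  proof (cases "a = t")
    case False
    then have "a < t" using assms(9) by simp
    moreover have "continuous_on {a..t} \<Phi>"
      unfolding \<Phi>_def using assms(1-3,9)
      by (intro continuous_intros) (auto elim: continuous_on_subset)
    moreover have "(\<Phi> has_real_derivative 0) (at s)" if "a < s" "s < t" for s
    proof -
      have "s < b" using that assms(9) by simp
      then show ?thesis
        unfolding \<Phi>_def using that
        by (auto intro!: derivative_eq_intros assms(4-6) simp: algebra_simps)
    qed
    ultimately show ?thesis by (intro DERIV_isconst2) auto
  qed simp
  also have "\<Phi> a = 0" by (simp add: \<Phi>_def assms(7,8))
  finally show ?thesis by (simp add: \<Phi>_def sum_power2_eq_zero_iff)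
qed

lemma tangent_angle_exists:
  fixes v v' :: "real \<Rightarrow> real^2"
  assumes deriv: "\<And>t. t \<in> {a..b} \<Longrightarrow> (v has_vector_derivative v' t) (at t within {a..b})"
    and cont': "continuous_on {a..b} v'"
    and nonzero: "\<And>t. t \<in> {a..b} \<Longrightarrow> v t \<noteq> 0"
    and "a \<le> b"
  obtains \<theta> where "continuous_on {a..b} \<theta>"
    "\<And>t. a < t \<Longrightarrow> t < b \<Longrightarrow> (\<theta> has_real_derivative det2 (v t) (v' t) / (norm (v t))\<^sup>2) (at t)"
    "\<And>t. t \<in> {a..b} \<Longrightarrow> v t $ 1 = norm (v t) * cos (\<theta> t) \<and> v t $ 2 = norm (v t) * sin (\<theta> t)"
proof -
  define k where "k t = det2 (v t) (v' t) / (norm (v t))\<^sup>2" for t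
  have cont: "continuous_on {a..b} v"
    using deriv by (rule continuous_on_if_has_vector_derivative_within)
  have cont_k: "continuous_on {a..b} k"
    unfolding k_def det2_def using nonzero by (intro continuous_intros cont cont') auto
  have "(v a $ 1 / norm (v a))\<^sup>2 + (v a $ 2 / norm (v a))\<^sup>2 = 1"
    using nonzero[of a] \<open>a \<le> b\<close> by (simp add: power_divide flip: add_divide_distrib norm_real2_squared)
  then obtain \<theta>\<^sub>0 where \<theta>\<^sub>0: "v a $ 1 / norm (v a) = cos \<theta>\<^sub>0" "v a $ 2 / norm (v a) = sin \<theta>\<^sub>0"
    by (metis sincos_total_2pi)
  define \<theta> where "\<theta> u = \<theta>\<^sub>0 + integral {a..u} k" for u
  have \<theta>_deriv_within: "(\<theta> has_real_derivative k t) (at t within {a..b})" if "t \<in> {a..b}" for t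
    unfolding \<theta>_def using integral_has_real_derivative[OF cont_k that]
    by (auto intro!: derivative_eq_intros)
  have \<theta>_cont: "continuous_on {a..b} \<theta>"
    using \<theta>_deriv_within
    by (intro continuous_on_if_has_vector_derivative_within)
      (simp add: has_real_derivative_iff_has_vector_derivative)
  have \<theta>_deriv: "(\<theta> has_real_derivative k t) (at t)" if "a < t" "t < b" for t
    using \<theta>_deriv_within[of t] that by (simp add: at_within_Icc_at)
  have unit_deriv:
    "((\<lambda>s. v s $ 1 / norm (v s)) has_real_derivative - k t * (v t $ 2 / norm (v t))) (at t)"
    "((\<lambda>s. v s $ 2 / norm (v s)) has_real_derivative k t * (v t $ 1 / norm (v t))) (at t)"
    if "a < t" "t < b" for t
    using unit_vector_components_derivative[of v "v' t" t] deriv[of t] nonzero[of t] that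
    by (simp_all add: k_def at_within_Icc_at)
  show ?thesis
  proof
    show "continuous_on {a..b} \<theta>" by (fact \<theta>_cont)
    show "(\<theta> has_real_derivative det2 (v t) (v' t) / (norm (v t))\<^sup>2) (at t)" if "a < t" "t < b" for t
      using \<theta>_deriv[OF that] by (simp add: k_def)
    fix t assume t: "t \<in> {a..b}"
    have "v t $ 1 / norm (v t) = cos (\<theta> t) \<and> v t $ 2 / norm (v t) = sin (\<theta> t)"
    proof (rule rotation_ode_eq_cos_sin[OF _ _ \<theta>_cont unit_deriv \<theta>_deriv _ _ t])
      show "continuous_on {a..b} (\<lambda>s. v s $ 1 / norm (v s))" "continuous_on {a..b} (\<lambda>s. v s $ 2 / norm (v s))"
        using nonzero by (auto intro!: continuous_intros cont)
      show "v a $ 1 / norm (v a) = cos (\<theta> a)" "v a $ 2 / norm (v a) = sin (\<theta> a)"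
        using \<theta>\<^sub>0 by (simp_all add: \<theta>_def)
    qed
    then show "v t $ 1 = norm (v t) * cos (\<theta> t) \<and> v t $ 2 = norm (v t) * sin (\<theta> t)"
      using nonzero[OF t] by (auto simp: field_simps)
  qed
qed

definition arclength :: "(real \<Rightarrow> real^2) \<Rightarrow> real \<Rightarrow> real \<Rightarrow> real \<Rightarrow> real" where
  "arclength \<gamma> a b u = integral {a..u} (\<lambda>t. norm (vd1 \<gamma> a b t))"

lemma C2_regular_curveD:
  assumes "C2_regular_curve \<gamma> a b"
  shows "a < b"
    and "\<And>t. t \<in> {a..b} \<Longrightarrow> (\<gamma> has_vector_derivative vd1 \<gamma> a b t) (at t within {a..b})"
    and "\<And>t. t \<in> {a..b} \<Longrightarrow> (vd1 \<gamma> a b has_vector_derivative vd2 \<gamma> a b t) (at t within {a..b})"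
    and "continuous_on {a..b} (vd2 \<gamma> a b)"
    and "\<And>t. t \<in> {a..b} \<Longrightarrow> vd1 \<gamma> a b t \<noteq> 0"
  using assms unfolding C2_regular_curve_def vd2_def by (auto simp: vd1_def vector_derivative_works)

lemma arclength_has_derivative:
  assumes "C2_regular_curve \<gamma> a b"
  shows "continuous_on {a..b} (arclength \<gamma> a b)"
    and "\<And>t. a < t \<Longrightarrow> t < b \<Longrightarrow> (arclength \<gamma> a b has_real_derivative norm (vd1 \<gamma> a b t)) (at t)"
proof -
  have "continuous_on {a..b} (vd1 \<gamma> a b)"
    using C2_regular_curveD(3)[OF assms] by (rule continuous_on_if_has_vector_derivative_within)
  then have "continuous_on {a..b} (\<lambda>t. norm (vd1 \<gamma> a b t))"
    by (intro continuous_intros)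
  then have deriv: "(arclength \<gamma> a b has_real_derivative norm (vd1 \<gamma> a b t)) (at t within {a..b})"
    if "t \<in> {a..b}" for t
    unfolding arclength_def using that by (intro integral_has_real_derivative)
  then show "continuous_on {a..b} (arclength \<gamma> a b)"
    by (intro continuous_on_if_has_vector_derivative_within)
      (simp add: has_real_derivative_iff_has_vector_derivative)
  show "(arclength \<gamma> a b has_real_derivative norm (vd1 \<gamma> a b t)) (at t)" if "a < t" "t < b" for t
    using deriv[of t] that by (simp add: at_within_Icc_at)
qed

lemma arclength_mono:
  assumes "C2_regular_curve \<gamma> a b" "a \<le> s" "s \<le> u" "u \<le> b"
  shows "arclength \<gamma> a b s \<le> arclength \<gamma> a b u"
proof (rule DERIV_nonneg_imp_increasing_open[OF assms(3)])
  fix t assume "s < t" "t < u"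
  then show "\<exists>d. (arclength \<gamma> a b has_real_derivative d) (at t) \<and> 0 \<le> d"
    using assms(2,4) arclength_has_derivative(2)[OF assms(1), of t] by auto
qed (use assms in \<open>auto intro: continuous_on_subset[OF arclength_has_derivative(1)]\<close>)

lemma curve_tangent_angle:
  assumes "C2_regular_curve \<gamma> a b"
  obtains \<theta> where "continuous_on {a..b} \<theta>"
    and "\<And>t. a < t \<Longrightarrow> t < b \<Longrightarrow>
      (\<theta> has_real_derivative curvature \<gamma> a b t * norm (vd1 \<gamma> a b t)) (at t)"
    and "\<And>t. t \<in> {a..b} \<Longrightarrow> vd1 \<gamma> a b t $ 1 = norm (vd1 \<gamma> a b t) * cos (\<theta> t) \<and>
      vd1 \<gamma> a b t $ 2 = norm (vd1 \<gamma> a b t) * sin (\<theta> t)"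
    and "\<theta> b - \<theta> a = total_curvature \<gamma> a b"
proof -
  note curve = C2_regular_curveD[OF assms]
  obtain \<theta> where cont: "continuous_on {a..b} \<theta>"
    and deriv': "\<And>t. a < t \<Longrightarrow> t < b \<Longrightarrow>
      (\<theta> has_real_derivative det2 (vd1 \<gamma> a b t) (vd2 \<gamma> a b t) / (norm (vd1 \<gamma> a b t))\<^sup>2) (at t)"
    and polar: "\<And>t. t \<in> {a..b} \<Longrightarrow> vd1 \<gamma> a b t $ 1 = norm (vd1 \<gamma> a b t) * cos (\<theta> t) \<and>
      vd1 \<gamma> a b t $ 2 = norm (vd1 \<gamma> a b t) * sin (\<theta> t)"
    using tangent_angle_exists[OF curve(3,4,5)] curve(1) by auto
  have deriv: "(\<theta> has_real_derivative curvature \<gamma> a b t * norm (vd1 \<gamma> a b t)) (at t)"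
    if "a < t" "t < b" for t
    using deriv'[OF that] curve(5)[of t] that
    by (simp add: curvature_def power2_eq_square power3_eq_cube)
  have "((\<lambda>t. curvature \<gamma> a b t * norm (vd1 \<gamma> a b t)) has_integral \<theta> b - \<theta> a) {a..b}"
    using curve(1) deriv
    by (intro fundamental_theorem_of_calculus_interior cont)
      (auto simp: has_real_derivative_iff_has_vector_derivative)
  then have "\<theta> b - \<theta> a = total_curvature \<gamma> a b"
    by (simp add: total_curvature_def integral_unique)
  with cont deriv polar show ?thesis by (rule that)
qed

lemma tangent_det2_bounds:
  assumes "C2_regular_curve \<gamma> a b" "\<forall>t\<in>{a..b}. 0 < curvature \<gamma> a b t"
    and "0 < R" "\<forall>t\<in>{a..b}. R \<le> 1 / curvature \<gamma> a b t"
    and "total_curvature \<gamma> a b \<le> pi"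
    and "a < s" "s < u" "u < b"
  shows "0 < det2 (vd1 \<gamma> a b s) (vd1 \<gamma> a b u)"
    and "det2 (vd1 \<gamma> a b s) (vd1 \<gamma> a b u)
      < norm (vd1 \<gamma> a b s) * norm (vd1 \<gamma> a b u) * (arclength \<gamma> a b u - arclength \<gamma> a b s) / R"
proof -
  let ?v = "vd1 \<gamma> a b" and ?\<sigma> = "arclength \<gamma> a b"
  note curve = C2_regular_curveD[OF assms(1)]
  obtain \<theta> where \<theta>_cont: "continuous_on {a..b} \<theta>"
    and \<theta>_deriv: "\<And>t. a < t \<Longrightarrow> t < b \<Longrightarrow>
      (\<theta> has_real_derivative curvature \<gamma> a b t * norm (?v t)) (at t)"
    and polar: "\<And>t. t \<in> {a..b} \<Longrightarrow> ?v t $ 1 = norm (?v t) * cos (\<theta> t) \<and>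
      ?v t $ 2 = norm (?v t) * sin (\<theta> t)"
    and \<theta>_total: "\<theta> b - \<theta> a = total_curvature \<gamma> a b"
    using curve_tangent_angle[OF assms(1)] by blast
  have turning_bounds: "0 < curvature \<gamma> a b t * norm (?v t) \<and>
      curvature \<gamma> a b t * norm (?v t) \<le> norm (?v t) / R" if "t \<in> {a..b}" for t
  proof -
    have "0 < curvature \<gamma> a b t" "curvature \<gamma> a b t \<le> 1 / R"
      using assms(2-4) that by (auto simp: field_simps)
    then show ?thesis
      using curve(5)[OF that] by (auto simp: mult_right_mono[of _ "1/R", simplified])
  qed
  have \<theta>_strict_mono: "\<theta> t < \<theta> t'" if "a \<le> t" "t < t'" "t' \<le> b" for t t'
  proof (rule DERIV_pos_imp_increasing_open[OF \<open>t < t'\<close>])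
    fix x assume "t < x" "x < t'"
    then show "\<exists>d. (\<theta> has_real_derivative d) (at x) \<and> 0 < d"
      using that turning_bounds[of x] \<theta>_deriv[of x] by auto
  qed (use that in \<open>auto intro: continuous_on_subset[OF \<theta>_cont]\<close>)
  have "\<theta> u - \<theta> s \<le> ?\<sigma> u / R - ?\<sigma> s / R"
  proof (rule increment_le_if_derivative_le[OF less_imp_le[OF \<open>s < u\<close>]])
    show "continuous_on {s..u} \<theta>" "continuous_on {s..u} (\<lambda>t. ?\<sigma> t / R)"
      using assms(3,6-8)
      by (auto intro!: continuous_intros continuous_on_subset[OF \<theta>_cont]
          continuous_on_subset[OF arclength_has_derivative(1)[OF assms(1)]])
    fix t assume "s < t" "t < u"
    then show "(\<theta> has_real_derivative curvature \<gamma> a b t * norm (?v t)) (at t)"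
      "((\<lambda>t. ?\<sigma> t / R) has_real_derivative norm (?v t) / R) (at t)"
      "curvature \<gamma> a b t * norm (?v t) \<le> norm (?v t) / R"
      using assms(6-8) turning_bounds[of t]
      by (auto intro!: derivative_eq_intros \<theta>_deriv arclength_has_derivative(2)[OF assms(1)])
  qed
  then have \<theta>_le_\<sigma>: "\<theta> u - \<theta> s \<le> (?\<sigma> u - ?\<sigma> s) / R"
    by (simp add: diff_divide_distrib)
  have angle: "0 < \<theta> u - \<theta> s" "\<theta> u - \<theta> s < pi"
    using \<theta>_strict_mono[of a s] \<theta>_strict_mono[of s u] \<theta>_strict_mono[of u b] \<theta>_total assms(5-8)
    by auto
  have det: "det2 (?v s) (?v u) = norm (?v s) * norm (?v u) * sin (\<theta> u - \<theta> s)"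
    using polar[of s] polar[of u] assms(6-8) by (intro det2_polar) auto
  have norms: "0 < norm (?v s) * norm (?v u)"
    using curve(5)[of s] curve(5)[of u] assms(6-8) by auto
  show "0 < det2 (?v s) (?v u)"
    unfolding det using norms sin_gt_zero[OF angle] by simp
  have "sin (\<theta> u - \<theta> s) < (?\<sigma> u - ?\<sigma> s) / R"
    using sin_less_self[OF angle(1)] \<theta>_le_\<sigma> by linarith
  then have "norm (?v s) * norm (?v u) * sin (\<theta> u - \<theta> s)
      < norm (?v s) * norm (?v u) * ((?\<sigma> u - ?\<sigma> s) / R)"
    using norms by (rule mult_strict_left_mono)
  then show "det2 (?v s) (?v u) < norm (?v s) * norm (?v u) * (?\<sigma> u - ?\<sigma> s) / R"
    unfolding det by simp
qed

lemma C2_regular_curve_chord_det2_bounds: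
  assumes curve: "C2_regular_curve \<gamma> a b" "\<forall>t\<in>{a..b}. 0 < curvature \<gamma> a b t"
    and "0 < R" "\<forall>t\<in>{a..b}. R \<le> 1 / curvature \<gamma> a b t"
    and "total_curvature \<gamma> a b \<le> pi"
    and t: "a \<le> t\<^sub>1" "t\<^sub>1 < t\<^sub>2" "t\<^sub>2 < t\<^sub>3" "t\<^sub>3 \<le> b"
  shows "0 < det2 (\<gamma> t\<^sub>2 - \<gamma> t\<^sub>1) (\<gamma> t\<^sub>3 - \<gamma> t\<^sub>2)"
    and "det2 (\<gamma> t\<^sub>2 - \<gamma> t\<^sub>1) (\<gamma> t\<^sub>3 - \<gamma> t\<^sub>2) < curve_length \<gamma> a b ^ 3 / (8 * R)"
proof -
  let ?\<sigma> = "arclength \<gamma> a b"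
  have sub: "{t\<^sub>1..t\<^sub>3} \<subseteq> {a..b}" using t by auto
  have "0 < det2 (\<gamma> t\<^sub>2 - \<gamma> t\<^sub>1) (\<gamma> t\<^sub>3 - \<gamma> t\<^sub>2) \<and>
    det2 (\<gamma> t\<^sub>2 - \<gamma> t\<^sub>1) (\<gamma> t\<^sub>3 - \<gamma> t\<^sub>2)
      < (?\<sigma> t\<^sub>2 - ?\<sigma> t\<^sub>1) * (?\<sigma> t\<^sub>3 - ?\<sigma> t\<^sub>2) * (?\<sigma> t\<^sub>3 - ?\<sigma> t\<^sub>1) / (2 * R)"
  proof (rule det2_chords_bound_from_tangents[OF t(2,3) \<open>0 < R\<close>])
    show "continuous_on {t\<^sub>1..t\<^sub>3} \<gamma>"
      using C2_regular_curveD(2)[OF curve(1)]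
      by (rule continuous_on_subset[OF continuous_on_if_has_vector_derivative_within sub])
    show "continuous_on {t\<^sub>1..t\<^sub>3} ?\<sigma>"
      by (rule continuous_on_subset[OF arclength_has_derivative(1)[OF curve(1)] sub])
    fix t assume "t\<^sub>1 < t" "t < t\<^sub>3"
    then show "(\<gamma> has_vector_derivative vd1 \<gamma> a b t) (at t)"
      "(?\<sigma> has_real_derivative norm (vd1 \<gamma> a b t)) (at t)"
      using t C2_regular_curveD(2)[OF curve(1), of t] arclength_has_derivative(2)[OF curve(1), of t]
      by (auto simp: at_within_Icc_at)
  next
    fix s u assume "t\<^sub>1 < s" "s < u" "u < t\<^sub>3"
    then show "0 < det2 (vd1 \<gamma> a b s) (vd1 \<gamma> a b u) \<and>
        det2 (vd1 \<gamma> a b s) (vd1 \<gamma> a b u)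
          < norm (vd1 \<gamma> a b s) * norm (vd1 \<gamma> a b u) * (?\<sigma> u - ?\<sigma> s) / R"
      using tangent_det2_bounds[OF assms(1-5)] t by auto
  qed
  moreover have "(?\<sigma> t\<^sub>2 - ?\<sigma> t\<^sub>1) * (?\<sigma> t\<^sub>3 - ?\<sigma> t\<^sub>2) * (?\<sigma> t\<^sub>3 - ?\<sigma> t\<^sub>1) / (2 * R)
      \<le> curve_length \<gamma> a b ^ 3 / (8 * R)"
  proof -
    have "?\<sigma> a \<le> ?\<sigma> t\<^sub>1" "?\<sigma> t\<^sub>3 \<le> ?\<sigma> b"
      "?\<sigma> t\<^sub>1 \<le> ?\<sigma> t\<^sub>2" "?\<sigma> t\<^sub>2 \<le> ?\<sigma> t\<^sub>3"
      using t by (auto intro!: arclength_mono[OF curve(1)])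
    moreover have "curve_length \<gamma> a b = ?\<sigma> b - ?\<sigma> a"
      by (simp add: curve_length_def arclength_def)
    ultimately have "(?\<sigma> t\<^sub>2 - ?\<sigma> t\<^sub>1) * (?\<sigma> t\<^sub>3 - ?\<sigma> t\<^sub>2) * (?\<sigma> t\<^sub>3 - ?\<sigma> t\<^sub>1)
        \<le> curve_length \<gamma> a b ^ 3 / 4"
      using mult_mult_add_le_cube_div_4[of "?\<sigma> t\<^sub>2 - ?\<sigma> t\<^sub>1" "?\<sigma> t\<^sub>3 - ?\<sigma> t\<^sub>2"] by auto
    then have "(?\<sigma> t\<^sub>2 - ?\<sigma> t\<^sub>1) * (?\<sigma> t\<^sub>3 - ?\<sigma> t\<^sub>2) * (?\<sigma> t\<^sub>3 - ?\<sigma> t\<^sub>1) / (2 * R)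
        \<le> curve_length \<gamma> a b ^ 3 / 4 / (2 * R)"
      using \<open>0 < R\<close> by (intro divide_right_mono) auto
    then show ?thesis by simp
  qed
  ultimately show "0 < det2 (\<gamma> t\<^sub>2 - \<gamma> t\<^sub>1) (\<gamma> t\<^sub>3 - \<gamma> t\<^sub>2)"
    "det2 (\<gamma> t\<^sub>2 - \<gamma> t\<^sub>1) (\<gamma> t\<^sub>3 - \<gamma> t\<^sub>2) < curve_length \<gamma> a b ^ 3 / (8 * R)"
    by auto
qed

theorem theorem6p1:
  fixes \<gamma> :: "real \<Rightarrow> real^2" and a b R\<^sub>1 :: real and v0 v1 v2 :: "real^2"
  assumes "convex_curve \<gamma> a b"
    and "R\<^sub>1 > 0"
    and "\<forall>t\<in>{a..b}. 1 / curvature \<gamma> a b t \<ge> R\<^sub>1"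
    and "total_curvature \<gamma> a b \<le> pi"
    and "det2 v1 v2 \<noteq> 0"
    and "curve_length \<gamma> a b / ((lattice_invariant v1 v2 * R\<^sub>1) powr (1/3)) \<le> 2"
  shows "finite (\<gamma> ` {a..b} \<inter> lattice v0 v1 v2) \<and> card (\<gamma> ` {a..b} \<inter> lattice v0 v1 v2) \<le> 2"
proof -
  let ?T = "{t \<in> {a..b}. \<gamma> t \<in> lattice v0 v1 v2}"
  have curve: "C2_regular_curve \<gamma> a b" "\<forall>t\<in>{a..b}. 0 < curvature \<gamma> a b t"
    using assms(1) by (auto simp: convex_curve_def)
  have "finite ?T \<and> card ?T \<le> 2"
  proof (rule ccontr)
    assume "\<not> (finite ?T \<and> card ?T \<le> 2)"
    then obtain t\<^sub>1 t\<^sub>2 t\<^sub>3 where t: "t\<^sub>1 \<in> ?T" "t\<^sub>2 \<in> ?T" "t\<^sub>3 \<in> ?T" "t\<^sub>1 < t\<^sub>2" "t\<^sub>2 < t\<^sub>3"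
      by (rule three_elements_if_not_card_le_2)
    let ?D = "det2 (\<gamma> t\<^sub>2 - \<gamma> t\<^sub>1) (\<gamma> t\<^sub>3 - \<gamma> t\<^sub>2)"
    have "0 < ?D" "?D < curve_length \<gamma> a b ^ 3 / (8 * R\<^sub>1)"
      using C2_regular_curve_chord_det2_bounds[OF curve assms(2)] assms(3,4) t by auto
    moreover have "curve_length \<gamma> a b ^ 3 / (8 * R\<^sub>1) \<le> lattice_invariant v1 v2"
      using assms(2,5,6) by (intro cube_le_if_le_twice_cube_root) (auto simp: lattice_invariant_def)
    moreover have "lattice_invariant v1 v2 \<le> \<bar>?D\<bar>"
      using t \<open>0 < ?D\<close> by (intro lattice_invariant_le_det2) auto
    ultimately show False by simp
  qed
  moreover have "\<gamma> ` {a..b} \<inter> lattice v0 v1 v2 = \<gamma> ` ?T" by auto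
  ultimately show ?thesis
    using card_image_le[of ?T \<gamma>] by auto
qed

end
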